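(* Let $K\ge 2$ and $M,N,d$ be positive integers. If $d\le\min(M,N-1)$ (in particular $N\ge 2$), then the symmetric system $(M\times N,d)^K$ is proper if and only if the symmetric system $((M+1)\times(N-1),d)^K$ is proper (equivalently, one is improper iff the other is). Similarly, if $d\le\min(M-1,N)$, then $(M\times N,d)^K$ is proper if and only if $((M-1)\times(N+1),d)^K$ is proper.
   Context: A $K$-user MIMO interference system $\Pi_{k=1}^K(M^{[k]}\times N^{[k]},d^{[k]})$ is specified by positive integers $M^{[k]}$, $N^{[k]}$ and $d^{[k]}\le\min(M^{[k]},N^{[k]})$, $k\in\mathcal{K}=\{1,\dots,K\}$; the symmetric system $(M\times N,d)^K$ has $M^{[k]}=M$, $N^{[k]}=N$, $d^{[k]}=d$ for all $k$. Its variables are: for each $j\in\mathcal K$ and $n\in\{1,\dots,d^{[j]}\}$ a set $T_{j,n}$ of $M^{[j]}-d^{[j]}$ variables, and for each $k\in\mathcal K$, $m\in\{1,\dots,d^{[k]}\}$ a set $R_{k,m}$ of $N^{[k]}-d^{[k]}$ variables, all pairwise disjoint. The equations are $E^{kj}_{mn}$ for $j,k\in\mathcal K$, $k\ne j$, $m\le d^{[k]}$, $n\le d^{[j]}$, forming the set $\mathcal E$, with $\mathrm{var}(E^{kj}_{mn})=T_{j,n}\cup R_{k,m}$. The system is proper if for every $S\subseteq\mathcal E$, $|S|\le\left|\bigcup_{E\in S}\mathrm{var}(E)\right|$, and improper otherwise. *)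

theory Defs
  imports Main
begin

text \<open>TV j n i : the i-th variable of the set T_{j,n} (i < M^{[j]} - d^{[j]});
  RV k m i : the i-th variable of the set R_{k,m} (i < N^{[k]} - d^{[k]}).
  Distinct constructors/arguments make all sets pairwise disjoint.\<close>
datatype mimo_var = TV nat nat nat | RV nat nat nat

text \<open>Users are indexed by {1..K}; streams by {1..d^{[k]}}.
  The equation E^{kj}_{mn} is represented by the tuple (k, j, m, n).\<close>
definition mimo_eqs :: "nat \<Rightarrow> (nat \<Rightarrow> nat) \<Rightarrow> (nat \<times> nat \<times> nat \<times> nat) set" where
  "mimo_eqs K d = {(k, j, m, n). k \<in> {1..K} \<and> j \<in> {1..K} \<and> k \<noteq> j
                     \<and> m \<in> {1..d k} \<and> n \<in> {1..d j}}"

definition T_set :: "(nat \<Rightarrow> nat) \<Rightarrow> (nat \<Rightarrow> nat) \<Rightarrow> nat \<Rightarrow> nat \<Rightarrow> mimo_var set" where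
  "T_set M d j n = {TV j n i | i. i < M j - d j}"

definition R_set :: "(nat \<Rightarrow> nat) \<Rightarrow> (nat \<Rightarrow> nat) \<Rightarrow> nat \<Rightarrow> nat \<Rightarrow> mimo_var set" where
  "R_set N d k m = {RV k m i | i. i < N k - d k}"

definition eq_vars :: "(nat \<Rightarrow> nat) \<Rightarrow> (nat \<Rightarrow> nat) \<Rightarrow> (nat \<Rightarrow> nat)
    \<Rightarrow> nat \<times> nat \<times> nat \<times> nat \<Rightarrow> mimo_var set" where
  "eq_vars M N d E = (case E of (k, j, m, n) \<Rightarrow> T_set M d j n \<union> R_set N d k m)"

definition mimo_proper :: "nat \<Rightarrow> (nat \<Rightarrow> nat) \<Rightarrow> (nat \<Rightarrow> nat) \<Rightarrow> (nat \<Rightarrow> nat) \<Rightarrow> bool" where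
  "mimo_proper K M N d =
     (\<forall>S \<subseteq> mimo_eqs K d. card S \<le> card (\<Union>E\<in>S. eq_vars M N d E))"

definition sym_proper :: "nat \<Rightarrow> nat \<Rightarrow> nat \<Rightarrow> nat \<Rightarrow> bool" where
  "sym_proper K M N d = mimo_proper K (\<lambda>_. M) (\<lambda>_. N) (\<lambda>_. d)"

end

theory Submission
  imports Defs
begin

text \<open>In the symmetric system every index (j, n) of a T-set, and likewise every index (k, m)
  of an R-set, occurs in at most (K - 1) d equations. So a set S of equations involving a
  T-indices and b R-indices has |S| \<le> (K - 1) d min(a, b), while its variables number exactly
  (M - d) a + (N - d) b. Hence (M \<times> N, d)^K is proper iff (K - 1) d \<le> (M - d) + (N - d),
  i.e. iff (K + 1) d \<le> M + N, necessity coming from the set of all equations. This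
  depends on M and N only through M + N, which moving one antenna does not change.\<close>

definition T_index :: "nat \<times> nat \<times> nat \<times> nat \<Rightarrow> nat \<times> nat" where
  "T_index = (\<lambda>(k, j, m, n). (j, n))"

definition R_index :: "nat \<times> nat \<times> nat \<times> nat \<Rightarrow> nat \<times> nat" where
  "R_index = (\<lambda>(k, j, m, n). (k, m))"

lemma card_le_mult_card_image:
  assumes "finite S" and fibre: "\<And>y. y \<in> f ` S \<Longrightarrow> card {x \<in> S. f x = y} \<le> c"
  shows "card S \<le> c * card (f ` S)"
proof -
  have "card S = card (\<Union>y\<in>f ` S. {x \<in> S. f x = y})"
    by (rule arg_cong[where f = card]) blast
  also have "\<dots> \<le> (\<Sum>y\<in>f ` S. card {x \<in> S. f x = y})"
    using assms(1) by (intro card_UN_le) simp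
  also have "\<dots> \<le> (\<Sum>y\<in>f ` S. c)"
    by (intro sum_mono fibre)
  finally show ?thesis by (simp add: mult.commute)
qed

lemma T_set_eq_image: "T_set M d j n = TV j n ` {..<M j - d j}"
  by (auto simp: T_set_def)

lemma R_set_eq_image: "R_set N d k m = RV k m ` {..<N k - d k}"
  by (auto simp: R_set_def)

lemma card_T_set: "card (T_set M d j n) = M j - d j"
  by (simp add: T_set_eq_image card_image inj_on_def)

lemma card_R_set: "card (R_set N d k m) = N k - d k"
  by (simp add: R_set_eq_image card_image inj_on_def)

lemma UN_eq_vars:
  "(\<Union>E\<in>S. eq_vars M N d E)
     = (\<Union>(j, n)\<in>T_index ` S. T_set M d j n) \<union> (\<Union>(k, m)\<in>R_index ` S. R_set N d k m)"
  by (fastforce simp: eq_vars_def T_index_def R_index_def)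

lemma card_UN_T_set:
  assumes "finite A"
  shows "card (\<Union>(j, n)\<in>A. T_set M d j n) = (\<Sum>(j, n)\<in>A. M j - d j)"
proof -
  have "card (\<Union>(j, n)\<in>A. T_set M d j n) = (\<Sum>(j, n)\<in>A. card (T_set M d j n))"
    using assms by (subst card_UN_disjoint) (auto simp: T_set_def split_def)
  then show ?thesis by (simp add: card_T_set)
qed

lemma card_UN_R_set:
  assumes "finite B"
  shows "card (\<Union>(k, m)\<in>B. R_set N d k m) = (\<Sum>(k, m)\<in>B. N k - d k)"
proof -
  have "card (\<Union>(k, m)\<in>B. R_set N d k m) = (\<Sum>(k, m)\<in>B. card (R_set N d k m))"
    using assms by (subst card_UN_disjoint) (auto simp: R_set_def split_def)
  then show ?thesis by (simp add: card_R_set)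
qed

lemma card_UN_eq_vars:
  assumes "finite S"
  shows "card (\<Union>E\<in>S. eq_vars M N d E)
           = (\<Sum>(j, n)\<in>T_index ` S. M j - d j) + (\<Sum>(k, m)\<in>R_index ` S. N k - d k)"
proof -
  have "card ((\<Union>(j, n)\<in>T_index ` S. T_set M d j n) \<union> (\<Union>(k, m)\<in>R_index ` S. R_set N d k m))
      = card (\<Union>(j, n)\<in>T_index ` S. T_set M d j n) + card (\<Union>(k, m)\<in>R_index ` S. R_set N d k m)"
    using assms by (intro card_Un_disjoint) (auto simp: T_set_eq_image R_set_eq_image split: prod.splits)
  then show ?thesis
    using assms by (simp only: UN_eq_vars card_UN_T_set card_UN_R_set finite_imageI)
qed

lemma finite_mimo_eqs: "finite (mimo_eqs K d)"
proof (rule finite_subset)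
  show "mimo_eqs K d \<subseteq> (SIGMA k:{1..K}. SIGMA j:{1..K}. {1..d k} \<times> {1..d j})"
    by (auto simp: mimo_eqs_def)
qed auto

lemma card_T_index_fibre:
  assumes "S \<subseteq> mimo_eqs K (\<lambda>_. d)" and "p \<in> T_index ` S"
  shows "card {E \<in> S. T_index E = p} \<le> (K - 1) * d"
proof -
  obtain j n where p: "p = (j, n)" and j: "j \<in> {1..K}"
    using assms by (auto simp: T_index_def mimo_eqs_def)
  have "{E \<in> S. T_index E = p} \<subseteq> (\<lambda>(k, m). (k, j, m, n)) ` (({1..K} - {j}) \<times> {1..d})"
    using assms(1) by (fastforce simp: p T_index_def mimo_eqs_def image_iff)
  then have "card {E \<in> S. T_index E = p} \<le> card (({1..K} - {j}) \<times> {1..d})"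
    by (intro order_trans[OF card_mono card_image_le]) auto
  also have "\<dots> = (K - 1) * d"
    using j by (simp add: card_cartesian_product)
  finally show ?thesis .
qed

lemma card_le_mult_card_T_index:
  assumes "S \<subseteq> mimo_eqs K (\<lambda>_. d)"
  shows "card S \<le> (K - 1) * d * card (T_index ` S)"
  using assms finite_subset[OF assms finite_mimo_eqs]
  by (intro card_le_mult_card_image card_T_index_fibre) auto

lemma card_le_mult_card_R_index:
  assumes "S \<subseteq> mimo_eqs K (\<lambda>_. d)"
  shows "card S \<le> (K - 1) * d * card (R_index ` S)"
proof -
  define swap :: "nat \<times> nat \<times> nat \<times> nat \<Rightarrow> nat \<times> nat \<times> nat \<times> nat"
    where "swap = (\<lambda>(k, j, m, n). (j, k, n, m))"
  have "card S = card (swap ` S)"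
    by (rule card_image[symmetric]) (auto simp: inj_on_def swap_def)
  also have "\<dots> \<le> (K - 1) * d * card (T_index ` swap ` S)"
    using assms by (intro card_le_mult_card_T_index) (auto simp: swap_def mimo_eqs_def)
  also have "T_index ` swap ` S = R_index ` S"
    by (force simp: swap_def T_index_def R_index_def)
  finally show ?thesis .
qed

lemma card_UN_eq_vars_sym:
  assumes "finite S"
  shows "card (\<Union>E\<in>S. eq_vars (\<lambda>_. M) (\<lambda>_. N) (\<lambda>_. d) E)
           = (M - d) * card (T_index ` S) + (N - d) * card (R_index ` S)"
  using assms by (simp add: card_UN_eq_vars split_def mult.commute)

lemma card_mimo_eqs_sym: "card (mimo_eqs K (\<lambda>_. d)) = K * (K - 1) * (d * d)"
proof -
  define pairs where "pairs = Sigma {1..K} (\<lambda>k. {1..K} - {k})"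
  have "card pairs = K * (K - 1)"
    unfolding pairs_def by (subst card_SigmaI) auto
  moreover have "mimo_eqs K (\<lambda>_. d) = (\<lambda>((k, j), (m, n)). (k, j, m, n)) ` (pairs \<times> {1..d} \<times> {1..d})"
    by (auto simp: mimo_eqs_def pairs_def image_iff)
  ultimately show ?thesis
    by (simp only:) (subst card_image; auto simp: inj_on_def card_cartesian_product)
qed

lemma sym_properI:
  assumes "(K - 1) * d \<le> (M - d) + (N - d)"
  shows "sym_proper K M N d"
  unfolding sym_proper_def mimo_proper_def
proof (intro allI impI)
  fix S assume S: "S \<subseteq> mimo_eqs K (\<lambda>_. d)"
  define a b where "a = card (T_index ` S)" and "b = card (R_index ` S)"
  have "card S \<le> (K - 1) * d * min a b"
    using card_le_mult_card_T_index[OF S] card_le_mult_card_R_index[OF S]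
    by (simp add: a_def b_def min_def)
  also have "\<dots> \<le> ((M - d) + (N - d)) * min a b"
    using assms by (rule mult_le_mono1)
  also have "\<dots> \<le> (M - d) * a + (N - d) * b"
    by (simp add: add_mult_distrib add_mono)
  also have "\<dots> = card (\<Union>E\<in>S. eq_vars (\<lambda>_. M) (\<lambda>_. N) (\<lambda>_. d) E)"
    using finite_subset[OF S finite_mimo_eqs] by (simp add: card_UN_eq_vars_sym a_def b_def)
  finally show "card S \<le> card (\<Union>E\<in>S. eq_vars (\<lambda>_. M) (\<lambda>_. N) (\<lambda>_. d) E)" .
qed

lemma sym_properD:
  assumes "sym_proper K M N d"
  shows "(K - 1) * d \<le> (M - d) + (N - d)"
proof (cases "K * d = 0")
  case False
  let ?S = "mimo_eqs K (\<lambda>_. d)"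
  have "T_index ` ?S \<subseteq> {1..K} \<times> {1..d}" and "R_index ` ?S \<subseteq> {1..K} \<times> {1..d}"
    by (auto simp: mimo_eqs_def T_index_def R_index_def)
  then have T: "card (T_index ` ?S) \<le> K * d" and R: "card (R_index ` ?S) \<le> K * d"
    using card_mono[of "{1..K} \<times> {1..d}"] by (simp_all add: card_cartesian_product)
  have "K * d * ((K - 1) * d) = card ?S"
    by (simp add: card_mimo_eqs_sym ac_simps)
  also have "\<dots> \<le> card (\<Union>E\<in>?S. eq_vars (\<lambda>_. M) (\<lambda>_. N) (\<lambda>_. d) E)"
    using assms unfolding sym_proper_def mimo_proper_def by blast
  also have "\<dots> = (M - d) * card (T_index ` ?S) + (N - d) * card (R_index ` ?S)"
    by (rule card_UN_eq_vars_sym[OF finite_mimo_eqs])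
  also have "\<dots> \<le> K * d * ((M - d) + (N - d))"
    using T R by (simp add: add_mult_distrib2 add_mono mult.commute)
  finally show ?thesis
    using False by simp
qed auto

theorem sym_proper_iff:
  assumes "d \<le> M" and "d \<le> N"
  shows "sym_proper K M N d \<longleftrightarrow> (K + 1) * d \<le> M + N"
proof -
  have "(K - 1) * d \<le> (M - d) + (N - d) \<longleftrightarrow> (K + 1) * d \<le> M + N"
    using assms by (cases K) (auto simp: algebra_simps)
  then show ?thesis
    using sym_properI sym_properD by blast
qed

theorem corollary2:
  fixes K M N d :: nat
  assumes "K \<ge> 2" and "M > 0" and "N > 0" and "d > 0"
  shows "(d \<le> min M (N - 1) \<longrightarrow>
            (sym_proper K M N d \<longleftrightarrow> sym_proper K (M + 1) (N - 1) d))
       \<and> (d \<le> min (M - 1) N \<longrightarrow>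
            (sym_proper K M N d \<longleftrightarrow> sym_proper K (M - 1) (N + 1) d))"
  using assms by (auto simp: sym_proper_iff)

end
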